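(* Let $N\ge 1$ and let $\mathbf{Z}_{\mathrm{SS}}\in\mathbb{C}^{N\times N}$, $z_{\mathrm{G}},z_{\mathrm{L}},z_{\mathrm{TT}},z_{\mathrm{RR}},z_{\mathrm{TR}}\in\mathbb{C}$, row vectors $\mathbf{z}_{\mathrm{TS}},\mathbf{z}_{\mathrm{RS}}\in\mathbb{C}^{1\times N}$ and column vectors $\mathbf{z}_{\mathrm{ST}},\mathbf{z}_{\mathrm{SR}}\in\mathbb{C}^{N\times 1}$ be fixed, and let $R_0\ge 0$. For a real vector $\mathbf{z}_{\mathrm{RIS,Im}}\in\mathbb{R}^{N}$ put $\mathbf{z}_{\mathrm{RIS}}=R_0\mathbf{1}+j\,\mathbf{z}_{\mathrm{RIS,Im}}\in\mathbb{C}^N$ (so every entry of $\mathbf{z}_{\mathrm{RIS}}$ has real part $R_0$) and $$\mathbf{Z}_{\mathrm{SE}}=\mathbf{Z}_{\mathrm{SS}}+\mathrm{diag}(\mathbf{z}_{\mathrm{RIS}}),$$ $$\phi_{\mathrm{KL}}=z_{\mathrm{KL}}-\mathbf{z}_{\mathrm{KS}}\mathbf{Z}_{\mathrm{SE}}^{-1}\mathbf{z}_{\mathrm{SL}},\quad \mathrm{K},\mathrm{L}\in\{\mathrm{T},\mathrm{R}\},$$ $$\tilde{z}_{\mathrm{T}}=z_{\mathrm{G}}+\phi_{\mathrm{TT}},\qquad \tilde{z}_{\mathrm{R}}=z_{\mathrm{L}}+\phi_{\mathrm{RR}},\qquad a=\bigl(\tilde{z}_{\mathrm{T}}\tilde{z}_{\mathrm{R}}-\phi_{\mathrm{TR}}^{2}\bigr)^{-1},$$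 $$h_{\mathrm{E2E}}=\frac{z_{\mathrm{L}}\phi_{\mathrm{TR}}}{\tilde{z}_{\mathrm{T}}\tilde{z}_{\mathrm{R}}-\phi_{\mathrm{TR}}^{2}},\qquad f(\mathbf{z}_{\mathrm{RIS}})=|h_{\mathrm{E2E}}|^{2},$$ at any $\mathbf{z}_{\mathrm{RIS,Im}}$ where $\mathbf{Z}_{\mathrm{SE}}$ is invertible and $\tilde{z}_{\mathrm{T}}\tilde{z}_{\mathrm{R}}-\phi_{\mathrm{TR}}^{2}\neq 0$. Then the gradient of $f$, regarded as a real-valued function of $\mathbf{z}_{\mathrm{RIS,Im}}\in\mathbb{R}^N$, is $$\nabla_{\mathbf{z}_{\mathrm{RIS,Im}}}f(\mathbf{z}_{\mathrm{RIS}})=2\,\mathfrak{I}\bigl(h_{\mathrm{E2E}}\,\mathrm{vec}_{d}(\mathbf{E}^{*})\bigr),$$ where $$\mathbf{E}=z_{\mathrm{L}}a\,\mathbf{Z}_{\mathrm{SE}}^{-1}\Bigl(\bigl(2a\phi_{\mathrm{TR}}^{2}+1\bigr)\mathbf{z}_{\mathrm{SR}}\mathbf{z}_{\mathrm{TS}}-a\phi_{\mathrm{TR}}\tilde{z}_{\mathrm{R}}\,\mathbf{z}_{\mathrm{ST}}\mathbf{z}_{\mathrm{TS}}-a\phi_{\mathrm{TR}}\tilde{z}_{\mathrm{T}}\,\mathbf{z}_{\mathrm{SR}}\mathbf{z}_{\mathrm{RS}}\Bigr)\mathbf{Z}_{\mathrm{SE}}^{-1}.$$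
   Context: This is the end-to-end transfer function of a SISO link assisted by a reconfigurable intelligent surface (RIS) with $N$ elements modeled as mutually coupled thin wire dipoles loaded by tunable impedances $\mathbf{z}_{\mathrm{RIS}}$. Here $\mathbf{Z}_{\mathrm{SS}}$ is the mutual impedance matrix among RIS elements, $z_{\mathrm{G}}$ the generator internal impedance, $z_{\mathrm{L}}$ the receiver load impedance, $z_{\mathrm{TT}},z_{\mathrm{RR}}$ the self impedances of the transmit and receive antennas, $z_{\mathrm{TR}}=z_{\mathrm{RT}}$ their mutual impedance, $\mathbf{z}_{\mathrm{TS}},\mathbf{z}_{\mathrm{RS}}$ (row vectors) the mutual impedances between the transmit/receive antenna and the RIS elements, and $\mathbf{z}_{\mathrm{ST}},\mathbf{z}_{\mathrm{SR}}$ (column vectors) the mutual impedances between the RIS elements and the transmit/receive antenna. $j$ is the imaginary unit, $\mathbf{1}$ is the all-ones vector, $(\cdot)^*$ denotes entrywise complex conjugation, $\mathfrak{I}(\cdot)$ is the entrywise imaginary part, $\mathrm{diag}(\mathbf{x})$ is the diagonal matrix with diagonal $\mathbf{x}$, and $\mathrm{vec}_d(\mathbf{X})$ is the column vector of diagonal entries of the square matrix $\mathbf{X}$. *)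

theory Defs
  imports "HOL-Analysis.Analysis"
begin

definition diagm :: "complex^'n \<Rightarrow> complex^'n^'n" where
  "diagm d = (\<chi> i j. if i = j then d $ i else 0)"

definition outer :: "complex^'n \<Rightarrow> complex^'n \<Rightarrow> complex^'n^'n" where
  "outer u v = (\<chi> i j. u $ i * v $ j)"

definition zRIS :: "real \<Rightarrow> real^'n \<Rightarrow> complex^'n" where
  "zRIS R0 x = (\<chi> i. complex_of_real R0 + \<i> * complex_of_real (x $ i))"

definition ZSE :: "complex^'n^'n \<Rightarrow> real \<Rightarrow> real^'n \<Rightarrow> complex^'n^'n" where
  "ZSE ZSS R0 x = ZSS + diagm (zRIS R0 x)"

definition phi :: "complex \<Rightarrow> complex^'n \<Rightarrow> complex^'n^'n \<Rightarrow> complex^'n \<Rightarrow> complex" where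
  "phi zKL zKS Z zSL = zKL - (\<Sum>i\<in>UNIV. zKS $ i * ((matrix_inv Z *v zSL) $ i))"

end

theory Submission
  imports Defs
begin

(* Z_SE depends affinely on the reactances, with derivative diag(j v) in direction v.
   Differentiating Z Z^-1 = I gives d(Z^-1) = - Z^-1 dZ Z^-1 (that Z^-1 is differentiable
   at all follows from Cramer's rule), so every phi_KL has derivative
   sum_k j v_k (Z^-1 z_SL)_k (z_KS Z^-1)_k. The quotient rule then yields
   dh = sum_k j v_k E_kk, and d|h|^2 = 2 Re (cnj h dh) = sum_k v_k 2 Im (h cnj E_kk). *)

lemma matrix_inv_right:
  fixes A :: "'a::semiring_1^'n^'m"
  assumes "invertible A"
  shows "A ** matrix_inv A = mat 1"
  using assms someI_ex[of "\<lambda>B. A ** B = mat 1 \<and> B ** A = mat 1"]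
  unfolding invertible_def matrix_inv_def by blast

lemma matrix_inv_left:
  fixes A :: "'a::semiring_1^'n^'m"
  assumes "invertible A"
  shows "matrix_inv A ** A = mat 1"
  using assms someI_ex[of "\<lambda>B. A ** B = mat 1 \<and> B ** A = mat 1"]
  unfolding invertible_def matrix_inv_def by blast

lemma matrix_inv_entry_cramer:
  fixes A :: "'a::field^'n^'n"
  assumes "det A \<noteq> 0"
  shows "matrix_inv A $ i $ j = det (\<chi> r c. if c = i then (if r = j then 1 else 0) else A $ r $ c) / det A"
proof -
  have "A *v (matrix_inv A *v axis j 1) = axis j 1"
    using assms by (simp add: matrix_vector_mul_assoc matrix_inv_right invertible_det_nz)
  then have "matrix_inv A *v axis j 1 = (\<chi> k. det (\<chi> r c. if c = k then axis j 1 $ r else A $ r $ c) / det A)"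
    using cramer[OF assms] by blast
  moreover have "(matrix_inv A *v axis j 1) $ i = matrix_inv A $ i $ j"
    by (simp add: matrix_vector_mult_def axis_def if_distrib cong: if_cong)
  moreover have "(\<chi> r c. if c = i then axis j 1 $ r else A $ r $ c)
      = (\<chi> r c. if c = i then (if r = j then 1 else 0) else A $ r $ c)"
    by (auto simp: axis_def vec_eq_iff)
  ultimately show ?thesis
    by simp
qed

lemma matrix_add_rdistrib: "((A::'a::semiring_1^'n^'m) + B) ** C = A ** C + B ** C"
  by (vector matrix_matrix_mult_def sum.distrib[symmetric] field_simps)

lemma bounded_bilinear_matrix_matrix_mult:
  "bounded_bilinear ((**) :: 'a::{real_algebra_1,euclidean_space}^'n^'m \<Rightarrow> 'a^'p^'n \<Rightarrow> 'a^'p^'m)"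
  unfolding bilinear_conv_bounded_bilinear[symmetric] bilinear_def
  by (auto intro!: linearI simp: matrix_add_ldistrib matrix_add_rdistrib scalar_matrix_assoc matrix_scalar_ac)

lemma has_derivative_vec_nth:
  "(f has_derivative f') F \<Longrightarrow> ((\<lambda>x. f x $ i) has_derivative (\<lambda>v. f' v $ i)) F"
  by (rule bounded_linear.has_derivative[OF bounded_linear_vec_nth])

lemma differentiable_vec_nth:
  "f differentiable F \<Longrightarrow> (\<lambda>x. f x $ i) differentiable F"
  unfolding differentiable_def by (blast intro: has_derivative_vec_nth)

lemma has_derivative_vec_lambda:
  fixes f :: "'a::euclidean_space \<Rightarrow> 'b::real_normed_vector^'n"
  assumes "\<And>i. ((\<lambda>x. f x $ i) has_derivative (\<lambda>v. f' v $ i)) F"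
  shows "(f has_derivative f') F"
proof -
  have "linear (\<lambda>v. f' v $ i)" for i
    using assms has_derivative_linear by blast
  then have "linear f'"
    by (auto intro!: linearI simp: vec_eq_iff linear_iff)
  then show ?thesis
    using assms by (auto simp: has_derivative_def linear_conv_bounded_linear intro!: vec_tendstoI)
qed

lemma differentiable_det:
  fixes A :: "'a::real_normed_vector \<Rightarrow> 'b::real_normed_field^'n^'n"
  assumes "\<And>i j. (\<lambda>x. A x $ i $ j) differentiable (at x within s)"
  shows "(\<lambda>x. det (A x)) differentiable (at x within s)"
proof -
  from assms obtain A' where entries: "\<And>i j. ((\<lambda>x. A x $ i $ j) has_derivative A' i j) (at x within s)"
    unfolding differentiable_def by metis
  show ?thesis
    unfolding det_def differentiable_def
    by (rule exI, rule has_derivative_sum, rule has_derivative_mult, rule has_derivative_const,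
        rule has_derivative_prod, rule entries)
qed

lemma eventually_invertible:
  fixes A :: "'a::real_normed_vector \<Rightarrow> 'b::real_normed_field^'n^'n"
  assumes "A differentiable (at x)" and "invertible (A x)"
  shows "\<forall>\<^sub>F y in at x. invertible (A y)"
proof -
  have "continuous (at x) (\<lambda>y. det (A y))"
    using assms(1) by (intro differentiable_imp_continuous_within differentiable_det differentiable_vec_nth)
  moreover have "det (A x) \<noteq> 0"
    using assms(2) invertible_det_nz by blast
  ultimately have "\<forall>\<^sub>F y in at x. det (A y) \<noteq> 0"
    unfolding continuous_at by (rule tendsto_imp_eventually_ne)
  then show ?thesis
    by (simp add: invertible_det_nz)
qed

lemma differentiable_matrix_inv:
  fixes A :: "'a::euclidean_space \<Rightarrow> 'b::real_normed_field^'n^'n"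
  assumes A: "A differentiable (at x)" and inv: "invertible (A x)"
  shows "(\<lambda>y. matrix_inv (A y)) differentiable (at x)"
proof -
  have det_nonzero: "det (A x) \<noteq> 0"
    using inv invertible_det_nz by blast
  let ?cramer = "\<lambda>i j y. det (\<chi> r c. if c = i then (if r = j then 1 else 0) else A y $ r $ c) / det (A y)"
  have "\<exists>D. ((\<lambda>y. matrix_inv (A y) $ i $ j) has_derivative D) (at x)" for i j
  proof -
    have entries: "(\<lambda>y. A y $ r $ c) differentiable (at x)" for r c
      by (rule differentiable_vec_nth[OF differentiable_vec_nth[OF A]])
    then have "(\<lambda>y. if c = i then k else A y $ r $ c) differentiable (at x)" for r c k
      by (cases "c = i") simp_all
    then have "(\<lambda>y. det (\<chi> r c. if c = i then (if r = j then 1 else 0) else A y $ r $ c)) differentiable (at x)"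
      by (intro differentiable_det) simp
    moreover have "(\<lambda>y. det (A y)) differentiable (at x)"
      by (intro differentiable_det entries)
    ultimately have "?cramer i j differentiable (at x)"
      using det_nonzero by (rule differentiable_divide)
    then obtain D where D: "(?cramer i j has_derivative D) (at x)"
      unfolding differentiable_def by blast
    have "\<forall>\<^sub>F y in at x. ?cramer i j y = matrix_inv (A y) $ i $ j"
      using eventually_invertible[OF A inv]
      by (auto elim!: eventually_mono simp: matrix_inv_entry_cramer invertible_det_nz)
    then have "((\<lambda>y. matrix_inv (A y) $ i $ j) has_derivative D) (at x)"
      by (rule has_derivative_transform_eventually[OF D]) (simp_all add: matrix_inv_entry_cramer det_nonzero)
    then show ?thesis by blast
  qed
  then obtain D where "\<And>i j. ((\<lambda>y. matrix_inv (A y) $ i $ j) has_derivative D i j) (at x)"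
    by metis
  then have "((\<lambda>y. matrix_inv (A y)) has_derivative (\<lambda>v. \<chi> i j. D i j v)) (at x)"
    by (intro has_derivative_vec_lambda) simp
  then show ?thesis
    unfolding differentiable_def by blast
qed

lemma has_derivative_matrix_inv:
  fixes A :: "'a::euclidean_space \<Rightarrow> 'b::{real_normed_field,euclidean_space}^'n^'n"
  assumes A: "(A has_derivative A') (at x)" and inv: "invertible (A x)"
  shows "((\<lambda>y. matrix_inv (A y)) has_derivative
           (\<lambda>v. - (matrix_inv (A x) ** A' v ** matrix_inv (A x)))) (at x)"
proof -
  let ?Ai = "matrix_inv (A x)"
  have dA: "A differentiable (at x)"
    using A unfolding differentiable_def by blast
  then obtain B' where B: "((\<lambda>y. matrix_inv (A y)) has_derivative B') (at x)"
    using differentiable_matrix_inv[OF dA inv] unfolding differentiable_def by blast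
  have "((\<lambda>y. A y ** matrix_inv (A y)) has_derivative (\<lambda>v. A x ** B' v + A' v ** ?Ai)) (at x)"
    by (rule bounded_bilinear.FDERIV[OF bounded_bilinear_matrix_matrix_mult A B])
  moreover have "((\<lambda>y. A y ** matrix_inv (A y)) has_derivative (\<lambda>v. 0)) (at x)"
  proof (rule has_derivative_transform_eventually[OF has_derivative_const])
    show "\<forall>\<^sub>F y in at x. mat 1 = A y ** matrix_inv (A y)"
      using eventually_invertible[OF dA inv] by (auto elim!: eventually_mono simp: matrix_inv_right)
  qed (simp_all add: matrix_inv_right inv)
  ultimately have "(\<lambda>v. A x ** B' v + A' v ** ?Ai) = (\<lambda>v. 0)"
    by (rule has_derivative_unique)
  then have product_rule: "A x ** B' v = - (A' v ** ?Ai)" for v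
    by (simp add: fun_eq_iff eq_neg_iff_add_eq_0)
  have "B' = (\<lambda>v. - (?Ai ** A' v ** ?Ai))"
  proof
    fix v
    have "B' v = ?Ai ** (A x ** B' v)"
      by (simp add: matrix_mul_assoc matrix_inv_left inv)
    then show "B' v = - (?Ai ** A' v ** ?Ai)"
      by (simp add: product_rule bounded_bilinear.minus_right[OF bounded_bilinear_matrix_matrix_mult]
          matrix_mul_assoc)
  qed
  with B show ?thesis
    by simp
qed

lemma has_derivative_ZSE:
  "((\<lambda>y. ZSE ZSS R0 y) has_derivative (\<lambda>v. diagm (\<chi> k. \<i> * of_real (v $ k)))) (at x)"
proof (intro has_derivative_vec_lambda)
  fix i j
  have "((\<lambda>y. of_real (y $ i)) has_derivative (\<lambda>v. of_real (v $ i))) (at x)"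
    by (intro bounded_linear.has_derivative[OF bounded_linear_of_real]
        bounded_linear.has_derivative[OF bounded_linear_vec_nth] has_derivative_ident)
  then show "((\<lambda>y. ZSE ZSS R0 y $ i $ j) has_derivative (\<lambda>v. diagm (\<chi> k. \<i> * of_real (v $ k)) $ i $ j)) (at x)"
    unfolding ZSE_def diagm_def zRIS_def
    by (cases "i = j")
      (auto intro!: has_derivative_eq_rhs[OF has_derivative_add] has_derivative_mult_right has_derivative_const)
qed

lemma sum_mult_matrix_diagm_matrix:
  "(\<Sum>i\<in>UNIV. u $ i * ((B ** diagm d ** C) *v w) $ i)
     = (\<Sum>k\<in>UNIV. d $ k * ((C *v w) $ k * (u v* B) $ k))"
proof -
  have "(B ** diagm d) $ i $ k = B $ i $ k * d $ k" for i k
    by (simp add: matrix_matrix_mult_def diagm_def if_distrib if_distribR cong: if_cong)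
  then have "(\<Sum>i\<in>UNIV. u $ i * ((B ** diagm d ** C) *v w) $ i)
      = (\<Sum>i\<in>UNIV. \<Sum>j\<in>UNIV. \<Sum>k\<in>UNIV. d $ k * (u $ i * B $ i $ k) * (C $ k $ j * w $ j))"
    by (simp add: matrix_matrix_mult_def matrix_vector_mult_def sum_distrib_left sum_distrib_right mult_ac)
  also have "\<dots> = (\<Sum>k\<in>UNIV. \<Sum>i\<in>UNIV. \<Sum>j\<in>UNIV. d $ k * (u $ i * B $ i $ k) * (C $ k $ j * w $ j))"
    by (subst sum.swap, subst (2) sum.swap) (rule refl)
  also have "\<dots> = (\<Sum>k\<in>UNIV. d $ k * ((C *v w) $ k * (u v* B) $ k))"
    by (simp add: matrix_vector_mult_def vector_matrix_mult_def sum_distrib_left sum_distrib_right mult_ac)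
      (rule sum.cong[OF refl], rule sum.swap)
  finally show ?thesis .
qed

lemma matrix_outer_combination_matrix_nth:
  "(C ** (\<chi> p q. \<alpha> * outer s1 t1 $ p $ q - \<beta> * outer s2 t2 $ p $ q - \<gamma> * outer s3 t3 $ p $ q) ** B) $ k $ l
     = \<alpha> * ((C *v s1) $ k * (t1 v* B) $ l) - \<beta> * ((C *v s2) $ k * (t2 v* B) $ l)
       - \<gamma> * ((C *v s3) $ k * (t3 v* B) $ l)"
  by (simp add: matrix_matrix_mult_def matrix_vector_mult_def vector_matrix_mult_def outer_def
      sum_subtractf sum.distrib sum_distrib_left sum_distrib_right algebra_simps)

lemma has_derivative_phi:
  fixes Z :: "'a::euclidean_space \<Rightarrow> complex^'n^'n"
  assumes "(Z has_derivative Z') (at x)" and "invertible (Z x)"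
  shows "((\<lambda>y. phi zKL u (Z y) w) has_derivative
           (\<lambda>v. \<Sum>i\<in>UNIV. u $ i * ((matrix_inv (Z x) ** Z' v ** matrix_inv (Z x)) *v w) $ i)) (at x)"
proof -
  note inverse_entries = has_derivative_vec_nth[OF has_derivative_vec_nth[OF has_derivative_matrix_inv[OF assms]]]
  have "((\<lambda>y. zKL - (\<Sum>i\<in>UNIV. u $ i * (\<Sum>j\<in>UNIV. matrix_inv (Z y) $ i $ j * w $ j)))
      has_derivative (\<lambda>v. 0 - (\<Sum>i\<in>UNIV. u $ i * (\<Sum>j\<in>UNIV.
          (- (matrix_inv (Z x) ** Z' v ** matrix_inv (Z x))) $ i $ j * w $ j)))) (at x)"
    by (intro has_derivative_diff has_derivative_const has_derivative_sum has_derivative_mult_right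
        has_derivative_mult_left inverse_entries)
  then show ?thesis
    by (simp add: phi_def matrix_vector_mult_def sum_negf)
qed

lemma has_derivative_phi_ZSE:
  assumes "invertible (ZSE ZSS R0 x)"
  shows "((\<lambda>y. phi zKL u (ZSE ZSS R0 y) w) has_derivative
           (\<lambda>v. \<Sum>k\<in>UNIV. \<i> * of_real (v $ k)
                 * ((matrix_inv (ZSE ZSS R0 x) *v w) $ k * (u v* matrix_inv (ZSE ZSS R0 x)) $ k))) (at x)"
  using has_derivative_phi[OF has_derivative_ZSE assms]
  by (simp add: sum_mult_matrix_diagm_matrix)

lemma has_derivative_e2e_gain:
  fixes P T R :: "'a::real_normed_vector \<Rightarrow> complex" and zG zL :: complex and x :: 'a
  defines "\<Delta> \<equiv> (zG + T x) * (zL + R x) - P x ^ 2"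
  assumes P: "(P has_derivative P') (at x)" and T: "(T has_derivative T') (at x)"
    and R: "(R has_derivative R') (at x)" and \<Delta>: "\<Delta> \<noteq> 0"
  shows "((\<lambda>y. zL * P y / ((zG + T y) * (zL + R y) - P y ^ 2)) has_derivative
           (\<lambda>v. zL * inverse \<Delta> * ((2 * inverse \<Delta> * P x ^ 2 + 1) * P' v
                 - inverse \<Delta> * P x * (zL + R x) * T' v - inverse \<Delta> * P x * (zG + T x) * R' v))) (at x)"
proof -
  have numerator: "((\<lambda>y. zL * P y) has_derivative (\<lambda>v. zL * P' v)) (at x)"
    by (rule has_derivative_mult_right[OF P])
  have denominator: "((\<lambda>y. (zG + T y) * (zL + R y) - P y ^ 2) has_derivative
      (\<lambda>v. T' v * (zL + R x) + (zG + T x) * R' v - 2 * P' v * P x)) (at x)"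
    by (rule has_derivative_eq_rhs, (rule derivative_intros P T R)+) (simp add: fun_eq_iff)
  have quotient_rule: "(zL * p' * d - zL * p * (t' * zR + zT * r' - 2 * p' * p)) / (d * d)
      = zL * inverse d * ((2 * inverse d * p ^ 2 + 1) * p' - inverse d * p * zR * t' - inverse d * p * zT * r')"
    if "d \<noteq> 0" for d p p' t' r' zT zR :: complex
    using that by (simp add: field_simps power2_eq_square)
  show ?thesis
    using has_derivative_divide'[OF numerator denominator \<Delta>[unfolded \<Delta>_def]]
    unfolding \<Delta>_def[symmetric] by (simp add: quotient_rule \<Delta>)
qed

lemma has_derivative_cmod_power2:
  fixes h :: "real^'n \<Rightarrow> complex"
  assumes "(h has_derivative (\<lambda>v. \<Sum>k\<in>UNIV. \<i> * of_real (v $ k) * e k)) (at x)"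
  shows "((\<lambda>y. (cmod (h y))\<^sup>2) has_derivative (\<lambda>v. (\<chi> k. 2 * Im (h x * cnj (e k))) \<bullet> v)) (at x)"
proof -
  have "(\<lambda>y. (cmod (h y))\<^sup>2) = (\<lambda>y. Re (h y * cnj (h y)))"
    by (simp add: complex_mult_cnj cmod_def)
  moreover have "((\<lambda>y. Re (h y * cnj (h y))) has_derivative
      (\<lambda>v. Re (h x * cnj (\<Sum>k\<in>UNIV. \<i> * of_real (v $ k) * e k)
             + (\<Sum>k\<in>UNIV. \<i> * of_real (v $ k) * e k) * cnj (h x)))) (at x)"
    by (intro has_derivative_Re has_derivative_mult has_derivative_cnj assms)
  ultimately show ?thesis
    by (simp add: inner_vec_def cnj_sum sum_distrib_left Re_sum sum.distrib[symmetric] algebra_simps)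
qed

theorem lemma1:
  fixes ZSS :: "complex^'n^'n"
    and zG zL zTT zRR zTR :: complex
    and zTS zRS zST zSR :: "complex^'n"
    and R0 :: real
    and x0 :: "real^'n"
  defines "hE2E \<equiv> (\<lambda>x::real^'n.
      let Z = ZSE ZSS R0 x;
          pTT = phi zTT zTS Z zST;
          pRR = phi zRR zRS Z zSR;
          pTR = phi zTR zTS Z zSR;
          zT = zG + pTT;
          zR = zL + pRR
      in zL * pTR / (zT * zR - pTR ^ 2))"
  assumes R0: "R0 \<ge> 0"
    and inv: "invertible (ZSE ZSS R0 x0)"
    and den: "(zG + phi zTT zTS (ZSE ZSS R0 x0) zST) * (zL + phi zRR zRS (ZSE ZSS R0 x0) zSR)
              - (phi zTR zTS (ZSE ZSS R0 x0) zSR) ^ 2 \<noteq> 0"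
  shows "let Z = ZSE ZSS R0 x0;
             Zi = matrix_inv Z;
             pTT = phi zTT zTS Z zST;
             pRR = phi zRR zRS Z zSR;
             pTR = phi zTR zTS Z zSR;
             zT = zG + pTT;
             zR = zL + pRR;
             a = inverse (zT * zR - pTR ^ 2);
             h = zL * pTR / (zT * zR - pTR ^ 2);
             E = (\<chi> i j. zL * a * (Zi **
                   ((\<chi> p q. (2 * a * pTR ^ 2 + 1) * outer zSR zTS $ p $ q
                      - a * pTR * zR * outer zST zTS $ p $ q
                      - a * pTR * zT * outer zSR zRS $ p $ q)) ** Zi) $ i $ j);
             g = (\<chi> i. 2 * Im (h * cnj (E $ i $ i)))
         in ((\<lambda>x. (cmod (hE2E x))\<^sup>2) has_derivative (\<lambda>v. g \<bullet> v)) (at x0)"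
proof -
  \<comment> \<open>The hypothesis \<open>R0 \<ge> 0\<close> is physically motivated only; the formula holds for every real \<open>R0\<close>.\<close>
  let ?Zi = "matrix_inv (ZSE ZSS R0 x0)"
  let ?pTT = "\<lambda>y. phi zTT zTS (ZSE ZSS R0 y) zST"
  let ?pRR = "\<lambda>y. phi zRR zRS (ZSE ZSS R0 y) zSR"
  let ?pTR = "\<lambda>y. phi zTR zTS (ZSE ZSS R0 y) zSR"
  define a where "a = inverse ((zG + ?pTT x0) * (zL + ?pRR x0) - ?pTR x0 ^ 2)"
  define e where "e k = zL * a * ((2 * a * ?pTR x0 ^ 2 + 1) * ((?Zi *v zSR) $ k * (zTS v* ?Zi) $ k)
    - a * ?pTR x0 * (zL + ?pRR x0) * ((?Zi *v zST) $ k * (zTS v* ?Zi) $ k)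
    - a * ?pTR x0 * (zG + ?pTT x0) * ((?Zi *v zSR) $ k * (zRS v* ?Zi) $ k))" for k
  have hE2E: "hE2E = (\<lambda>y. zL * ?pTR y / ((zG + ?pTT y) * (zL + ?pRR y) - ?pTR y ^ 2))"
    unfolding hE2E_def Let_def ..
  have combine: "(\<Sum>k\<in>UNIV. d k * (c * (\<alpha> * X k - \<beta> * Y k - \<gamma> * W k)))
      = c * (\<alpha> * (\<Sum>k\<in>UNIV. d k * X k) - \<beta> * (\<Sum>k\<in>UNIV. d k * Y k) - \<gamma> * (\<Sum>k\<in>UNIV. d k * W k))"
    for d X Y W :: "'n \<Rightarrow> complex" and c \<alpha> \<beta> \<gamma> :: complex
    by (simp add: sum_subtractf sum.distrib sum_distrib_left algebra_simps)
  have "(hE2E has_derivative (\<lambda>v. \<Sum>k\<in>UNIV. \<i> * of_real (v $ k) * e k)) (at x0)"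
    unfolding hE2E
    using has_derivative_e2e_gain[OF has_derivative_phi_ZSE[OF inv] has_derivative_phi_ZSE[OF inv]
        has_derivative_phi_ZSE[OF inv] den, folded a_def]
    by (rule has_derivative_eq_rhs) (simp add: fun_eq_iff e_def combine)
  then show ?thesis
    unfolding Let_def
    by (rule has_derivative_eq_rhs[OF has_derivative_cmod_power2])
      (simp add: fun_eq_iff hE2E e_def a_def matrix_outer_combination_matrix_nth)
qed

end
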